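(* Let $\tau$ be a lozenge tiling of a triangular region $T=T_d(I)$ and let $\sigma$ be an $n$-cycle of lozenges in $\tau$. Then the twist $\tau'$ of $\sigma$ in $\tau$ satisfies $\operatorname{msgn}(\tau')=(-1)^{n-1}\operatorname{msgn}(\tau)$.
   Context: $\mathcal T_d$ is an equilateral triangle of side length $d$ subdivided into unit triangles, upward ones labeled by degree $d-1$ monomials in $K[x,y,z]$, downward ones by degree $d-2$ monomials ($x^{d-1}$ top, $y^{d-1}$ bottom-left, $z^{d-1}$ bottom-right; an upward triangle sharing an edge with a downward one has label the downward label times a variable). For a monomial ideal $I$, $T_d(I)$ is the set of unit triangles whose labels are not in $I$. A lozenge is a union of two unit triangles sharing an edge; a lozenge tiling covers each unit triangle exactly once. Order monomials by graded reverse-lexicographic order; let $B_1,B_2,\dots$ be the downward and $W_1,W_2,\dots$ the upward triangles of $T$ in that order. A tiling $\tau$ determines the permutation $\pi$ with $B_i$ and $W_{\pi(i)}$ in a common lozenge, and $\operatorname{msgn}(\tau)=\operatorname{sgn}(\pi)$. An $n$-cycle of lozenges in $\tau$ is an ordered collection of distinct lozenges $\ell_1,\dots,\ell_n$ of $\tau$ such that the downward triangle of $\ell_i$ shares an edge with the upward triangle of $\ell_{i+1}$ for $1\le i<n$ and the downward triangle of $\ell_n$ shares an edge with the upward triangle of $\ell_1$. The twist of this cycle in $\tau$ is the tiling obtained by replacing $\ell_1,\dots,\ell_n$ by the lozenges formed by the downward triangle of $\ell_i$ and the upward triangle of $\ell_{i+1}$ ($1\le i<n$) and by the downward triangle of $\ell_n$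 and the upward triangle of $\ell_1$. *)

theory Defs
  imports "HOL-Combinatorics.Permutations"
begin

text \<open>A monomial x^a y^b z^c in K[x,y,z] is represented by its exponent triple (a,b,c).\<close>
type_synonym monom = "nat \<times> nat \<times> nat"

definition mdeg :: "monom \<Rightarrow> nat" where
  "mdeg m = (case m of (a, b, c) \<Rightarrow> a + b + c)"

definition mmult :: "monom \<Rightarrow> monom \<Rightarrow> monom" where
  "mmult m e = (case m of (a, b, c) \<Rightarrow> case e of (a', b', c') \<Rightarrow> (a + a', b + b', c + c'))"

text \<open>A monomial ideal is determined by the set of monomials it contains; this set is
  closed under multiplication by arbitrary monomials.\<close>
definition monomial_ideal :: "monom set \<Rightarrow> bool" where
  "monomial_ideal I \<longleftrightarrow> (\<forall>m \<in> I. \<forall>e. mmult m e \<in> I)"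

definition grevlex_gt :: "monom \<Rightarrow> monom \<Rightarrow> bool" where
  "grevlex_gt m m' = (case m of (a, b, c) \<Rightarrow> case m' of (a', b', c') \<Rightarrow>
     (a + b + c > a' + b' + c') \<or>
     (a + b + c = a' + b' + c' \<and> (c < c' \<or> (c = c' \<and> b < b'))))"

text \<open>Downward triangles of T_d(I): labels of degree d-2 not in I;
  upward triangles: labels of degree d-1 not in I.\<close>
definition downs :: "nat \<Rightarrow> monom set \<Rightarrow> monom set" where
  "downs d I = {m. mdeg m + 2 = d \<and> m \<notin> I}"

definition ups :: "nat \<Rightarrow> monom set \<Rightarrow> monom set" where
  "ups d I = {m. mdeg m + 1 = d \<and> m \<notin> I}"

text \<open>The downward triangle labelled b shares an edge with the upward triangle labelled w
  iff w = b times a variable.\<close>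
definition adj :: "monom \<Rightarrow> monom \<Rightarrow> bool" where
  "adj b w \<longleftrightarrow> w = mmult b (1,0,0) \<or> w = mmult b (0,1,0) \<or> w = mmult b (0,0,1)"

text \<open>A lozenge is (downward label, upward label) of two adjacent unit triangles.
  A lozenge tiling of T_d(I) is a set of lozenges inside T_d(I) covering every unit triangle
  exactly once.\<close>
definition is_tiling :: "nat \<Rightarrow> monom set \<Rightarrow> (monom \<times> monom) set \<Rightarrow> bool" where
  "is_tiling d I \<tau> \<longleftrightarrow>
     (\<forall>(b, w) \<in> \<tau>. b \<in> downs d I \<and> w \<in> ups d I \<and> adj b w) \<and>
     (\<forall>b \<in> downs d I. \<exists>!w. (b, w) \<in> \<tau>) \<and>
     (\<forall>w \<in> ups d I. \<exists>!b. (b, w) \<in> \<tau>)"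

text \<open>Position (0-based) of m in S listed in decreasing grevlex order.\<close>
definition rank :: "monom set \<Rightarrow> monom \<Rightarrow> nat" where
  "rank S m = card {m' \<in> S. grevlex_gt m' m}"

text \<open>The permutation pi (on 0-based indices) with B_i and W_{pi(i)} in a common lozenge.\<close>
definition tiling_perm :: "nat \<Rightarrow> monom set \<Rightarrow> (monom \<times> monom) set \<Rightarrow> nat \<Rightarrow> nat" where
  "tiling_perm d I \<tau> i =
     (if \<exists>b w. (b, w) \<in> \<tau> \<and> rank (downs d I) b = i
      then (THE j. \<exists>b w. (b, w) \<in> \<tau> \<and> rank (downs d I) b = i \<and> rank (ups d I) w = j)
      else i)"

definition msgn :: "nat \<Rightarrow> monom set \<Rightarrow> (monom \<times> monom) set \<Rightarrow> int" where
  "msgn d I \<tau> = sign (tiling_perm d I \<tau>)"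

definition is_lozenge_cycle :: "(monom \<times> monom) set \<Rightarrow> (monom \<times> monom) list \<Rightarrow> bool" where
  "is_lozenge_cycle \<tau> ls \<longleftrightarrow>
     ls \<noteq> [] \<and> distinct ls \<and> set ls \<subseteq> \<tau> \<and>
     (\<forall>i < length ls. adj (fst (ls ! i)) (snd (ls ! ((i + 1) mod length ls))))"

definition twist :: "(monom \<times> monom) set \<Rightarrow> (monom \<times> monom) list \<Rightarrow> (monom \<times> monom) set" where
  "twist \<tau> ls = (\<tau> - set ls) \<union>
     {(fst (ls ! i), snd (ls ! ((i + 1) mod length ls))) | i. i < length ls}"

end

theory Submission
  imports Defs "HOL-Combinatorics.Cycles"
begin

text \<open>Write \<open>b\<^sub>1, \<dots>, b\<^sub>n\<close> for the downward triangles of the cycle and \<open>\<rho>\<close> for the cyclic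
  permutation \<open>b\<^sub>i \<mapsto> b\<^sub>i\<^sub>+\<^sub>1\<close>. The twist pairs every downward triangle \<open>c\<close> with the
  upward partner of \<open>\<rho> c\<close> in \<open>\<tau>\<close>. Passing to grevlex positions, the permutation of the
  twist is therefore the permutation of \<open>\<tau>\<close> composed with an \<open>n\<close>-cycle, whose sign
  is \<open>(-1)\<^sup>n\<^sup>-\<^sup>1\<close>.\<close>

lemma sign_cycle_of_list:
  assumes "distinct cs"
  shows "sign (cycle_of_list cs) = (-1) ^ (length cs - 1)"
  using assms
proof (induction cs rule: cycle_of_list.induct)
  case (1 i j cs)
  have "sign (cycle_of_list (i # j # cs)) = sign (transpose i j) * sign (cycle_of_list (j # cs))"
    by (simp add: sign_compose permutation_swap_id permutation_of_cycle)
  also have "\<dots> = - ((-1) ^ length cs)"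
    using 1 by (simp add: sign_swap_id)
  finally show ?case by (simp only: cycle_of_list.simps) simp
qed (auto simp: sign_def evenperm_id)

lemma transpose_apply_inj_on:
  assumes "inj_on f {a, b, c}"
  shows "transpose (f a) (f b) (f c) = f (transpose a b c)"
  using assms by (auto simp: transpose_def inj_on_def)

lemma cycle_of_list_map_apply:
  assumes "inj_on f (insert x (set cs))"
  shows "cycle_of_list (map f cs) (f x) = f (cycle_of_list cs x)"
  using assms
proof (induction cs rule: cycle_of_list.induct)
  case (1 i j cs)
  let ?y = "cycle_of_list (j # cs) x"
  have inj: "inj_on f (insert x (set (i # j # cs)))"
    by (fact "1.prems")
  have y: "?y \<in> insert x (set (j # cs))"
    using permutes_in_image[OF cycle_permutes, of "j # cs" x] id_outside_supp[of x "j # cs"]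
    by blast
  have "cycle_of_list (map f (j # cs)) (f x) = f ?y"
  proof (cases "x \<in> set (j # cs)")
    case True
    then show ?thesis
      using inj by (intro "1.IH") (auto intro: inj_on_subset)
  next
    case False
    then have "f x \<notin> set (map f (j # cs))"
      using inj by (auto simp: inj_on_def)
    then show ?thesis
      using False id_outside_supp by metis
  qed
  then have "cycle_of_list (map f (i # j # cs)) (f x) = transpose (f i) (f j) (f ?y)"
    by simp
  also have "\<dots> = f (transpose i j ?y)"
    using y by (intro transpose_apply_inj_on inj_on_subset[OF inj]) auto
  finally show ?case by simp
qed simp_all

subsection \<open>Ranks in grevlex order\<close>

lemma grevlex_gt_irrefl: "\<not> grevlex_gt m m"
  by (cases m) (auto simp: grevlex_gt_def)

lemma grevlex_gt_trans: "grevlex_gt a b \<Longrightarrow> grevlex_gt b c \<Longrightarrow> grevlex_gt a c"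
  by (cases a; cases b; cases c) (auto simp: grevlex_gt_def)

lemma grevlex_gt_total: "a \<noteq> b \<Longrightarrow> grevlex_gt a b \<or> grevlex_gt b a"
  by (cases a; cases b) (auto simp: grevlex_gt_def)

lemma rank_less:
  assumes "finite S" "a \<in> S" "grevlex_gt a b"
  shows "rank S a < rank S b"
proof -
  have "{x \<in> S. grevlex_gt x a} \<subset> {x \<in> S. grevlex_gt x b}"
    using assms grevlex_gt_trans grevlex_gt_irrefl by blast
  then show ?thesis
    unfolding rank_def using assms(1) by (simp add: psubset_card_mono)
qed

lemma bij_betw_rank:
  assumes "finite S"
  shows "bij_betw (rank S) S {..<card S}"
proof -
  have inj: "inj_on (rank S) S"
  proof (rule inj_onI, rule ccontr)
    fix a b assume "a \<in> S" "b \<in> S" "rank S a = rank S b" "a \<noteq> b"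
    then show False
      using grevlex_gt_total rank_less[OF assms] by (metis less_irrefl)
  qed
  have "rank S m < card S" if "m \<in> S" for m
  proof -
    have "{x \<in> S. grevlex_gt x m} \<subset> S"
      using that grevlex_gt_irrefl by blast
    then show ?thesis
      unfolding rank_def using assms by (simp add: psubset_card_mono)
  qed
  then have "rank S ` S \<subseteq> {..<card S}"
    by blast
  moreover have "card (rank S ` S) = card {..<card S}"
    using card_image[OF inj] by simp
  ultimately show ?thesis
    using inj by (simp add: bij_betw_def card_subset_eq)
qed

lemma finite_mdeg_le: "finite {m. mdeg m \<le> k}"
proof (rule finite_subset)
  show "{m. mdeg m \<le> k} \<subseteq> {..k} \<times> {..k} \<times> {..k}"
    by (auto simp: mdeg_def)
qed simp

lemma finite_downs: "finite (downs d I)"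
  by (rule finite_subset[OF _ finite_mdeg_le[of d]]) (auto simp: downs_def)

lemma finite_ups: "finite (ups d I)"
  by (rule finite_subset[OF _ finite_mdeg_le[of d]]) (auto simp: ups_def)

lemmas bij_betw_rank_downs = bij_betw_rank[OF finite_downs]
lemmas bij_betw_rank_ups = bij_betw_rank[OF finite_ups]

lemma rank_downs_less_card: "b \<in> downs d I \<Longrightarrow> rank (downs d I) b < card (downs d I)"
  by (metis bij_betw_apply bij_betw_rank_downs lessThan_iff)

lemma obtain_rank_downs:
  assumes "i < card (downs d I)"
  obtains c where "c \<in> downs d I" "i = rank (downs d I) c"
proof -
  have "i \<in> rank (downs d I) ` downs d I"
    using assms bij_betw_imp_surj_on[OF bij_betw_rank_downs[of d I]] by simp
  then show thesis
    using that by blast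
qed

subsection \<open>The permutation of a matching of the downward triangles\<close>

text \<open>The part of \<open>is_tiling\<close> on which \<open>tiling_perm\<close> depends.\<close>
definition down_matching :: "nat \<Rightarrow> monom set \<Rightarrow> (monom \<times> monom) set \<Rightarrow> bool" where
  "down_matching d I \<tau> \<longleftrightarrow>
     (\<forall>p \<in> \<tau>. fst p \<in> downs d I) \<and> (\<forall>b \<in> downs d I. \<exists>!w. (b, w) \<in> \<tau>)"

lemma tiling_down_matching: "is_tiling d I \<tau> \<Longrightarrow> down_matching d I \<tau>"
  by (auto simp: is_tiling_def down_matching_def)

lemma down_matching_inj_on_fst: "down_matching d I \<tau> \<Longrightarrow> inj_on fst \<tau>"
  by (fastforce simp: down_matching_def inj_on_def)

lemma down_matching_unique:
  assumes "down_matching d I \<tau>" "(b, w) \<in> \<tau>" "(b, w') \<in> \<tau>"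
  shows "w = w'"
  using assms unfolding down_matching_def by force

lemma tiling_perm_rank:
  assumes M: "down_matching d I \<tau>" and bw: "(b, w) \<in> \<tau>"
  shows "tiling_perm d I \<tau> (rank (downs d I) b) = rank (ups d I) w"
proof -
  let ?rD = "rank (downs d I)" and ?rU = "rank (ups d I)"
  have the_partner: "(THE j. \<exists>b' w'. (b', w') \<in> \<tau> \<and> ?rD b' = ?rD b \<and> ?rU w' = j) = ?rU w"
  proof (rule the_equality)
    fix j assume "\<exists>b' w'. (b', w') \<in> \<tau> \<and> ?rD b' = ?rD b \<and> ?rU w' = j"
    then obtain b' w' where b'w': "(b', w') \<in> \<tau>" "?rD b' = ?rD b" "?rU w' = j"
      by blast
    have "b' \<in> downs d I" "b \<in> downs d I"
      using M bw b'w'(1) unfolding down_matching_def by fastforce+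
    then have "b' = b"
      using inj_onD[OF bij_betw_imp_inj_on[OF bij_betw_rank_downs] b'w'(2)] by blast
    then have "w' = w"
      using down_matching_unique[OF M] bw b'w'(1) by blast
    then show "j = ?rU w"
      using b'w'(3) by simp
  qed (use bw in blast)
  have has_partner: "\<exists>b' w'. (b', w') \<in> \<tau> \<and> ?rD b' = ?rD b"
    using bw by blast
  show ?thesis
    unfolding tiling_perm_def if_P[OF has_partner] by (fact the_partner)
qed

lemma tiling_perm_beyond:
  assumes M: "down_matching d I \<tau>" and i: "card (downs d I) \<le> i"
  shows "tiling_perm d I \<tau> i = i"
proof -
  have "\<not> (\<exists>b w. (b, w) \<in> \<tau> \<and> rank (downs d I) b = i)"
  proof
    assume "\<exists>b w. (b, w) \<in> \<tau> \<and> rank (downs d I) b = i"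
    then obtain b w where "(b, w) \<in> \<tau>" "rank (downs d I) b = i"
      by blast
    moreover from this(1) have "b \<in> downs d I"
      using M unfolding down_matching_def by fastforce
    ultimately have "i < card (downs d I)"
      using rank_downs_less_card by blast
    with i show False
      by simp
  qed
  then show ?thesis
    unfolding tiling_perm_def by (rule if_not_P)
qed

lemma bij_betw_fst_if_unique:
  assumes "fst ` R \<subseteq> A" and unique: "\<forall>a \<in> A. \<exists>!b. (a, b) \<in> R"
  shows "bij_betw fst R A"
proof -
  have "inj_on fst R"
  proof (rule inj_onI)
    fix p q assume pq: "p \<in> R" "q \<in> R" "fst p = fst q"
    then have "(fst p, snd p) \<in> R" "(fst p, snd q) \<in> R" "fst p \<in> A"
      using assms(1) by (metis prod.collapse, metis prod.collapse, blast)
    then have "snd p = snd q"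
      using unique by blast
    with pq(3) show "p = q"
      by (rule prod_eqI)
  qed
  moreover have "A \<subseteq> fst ` R"
  proof
    fix a assume "a \<in> A"
    then obtain b where "(a, b) \<in> R"
      using unique by blast
    then show "a \<in> fst ` R"
      by force
  qed
  ultimately show ?thesis
    using assms(1) by (simp add: bij_betw_def subset_antisym)
qed

lemma card_ups_eq_card_downs:
  assumes T: "is_tiling d I \<tau>"
  shows "card (ups d I) = card (downs d I)"
proof -
  have "bij_betw fst \<tau> (downs d I)"
    using T unfolding is_tiling_def by (intro bij_betw_fst_if_unique) auto
  moreover have "bij_betw fst (prod.swap ` \<tau>) (ups d I)"
    using T unfolding is_tiling_def by (intro bij_betw_fst_if_unique) auto
  moreover have "card (prod.swap ` \<tau>) = card \<tau>"
    by (simp add: card_image)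
  ultimately show ?thesis
    by (metis bij_betw_same_card)
qed

lemma tiling_perm_permutes:
  assumes T: "is_tiling d I \<tau>"
  shows "tiling_perm d I \<tau> permutes {..<card (downs d I)}"
proof -
  let ?D = "downs d I" and ?U = "ups d I" and ?p = "tiling_perm d I \<tau>"
  have M: "down_matching d I \<tau>"
    using T by (rule tiling_down_matching)
  have partner: "\<exists>b w. (b, w) \<in> \<tau> \<and> b \<in> ?D \<and> w \<in> ?U \<and> i = rank ?D b \<and> ?p i = rank ?U w"
    if i: "i < card ?D" for i
  proof -
    obtain b where "b \<in> ?D" "i = rank ?D b"
      using i by (rule obtain_rank_downs)
    moreover obtain w where "(b, w) \<in> \<tau>"
      using M \<open>b \<in> ?D\<close> unfolding down_matching_def by blast
    ultimately show ?thesis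
      using T tiling_perm_rank[OF M] unfolding is_tiling_def by blast
  qed
  have "?p ` {..<card ?D} \<subseteq> {..<card ?D}"
    using partner bij_betw_apply[OF bij_betw_rank_ups] card_ups_eq_card_downs[OF T]
    by fastforce
  moreover have "inj_on ?p {..<card ?D}"
  proof (rule inj_onI)
    fix i j assume "i \<in> {..<card ?D}" "j \<in> {..<card ?D}" "?p i = ?p j"
    then obtain b w b' w' where
      "(b, w) \<in> \<tau>" "(b', w') \<in> \<tau>" "w \<in> ?U" "w' \<in> ?U"
      "i = rank ?D b" "j = rank ?D b'" "rank ?U w = rank ?U w'"
      using partner by (metis lessThan_iff)
    then show "i = j"
      using T bij_betw_rank_ups[of d I] unfolding is_tiling_def
      by (metis bij_betw_imp_inj_on inj_onD)
  qed
  ultimately have "bij_betw ?p {..<card ?D} {..<card ?D}"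
    by (simp add: bij_betw_def endo_inj_surj)
  then show ?thesis
    by (rule bij_imp_permutes) (use tiling_perm_beyond[OF M] in simp)
qed

lemma down_matching_precompose:
  assumes M: "down_matching d I \<tau>" and \<rho>: "\<rho> permutes downs d I"
  shows "down_matching d I {(c, v). (\<rho> c, v) \<in> \<tau>}"
  using M permutes_in_image[OF \<rho>] unfolding down_matching_def by auto

lemma tiling_perm_precompose:
  assumes M: "down_matching d I \<tau>" and \<rho>: "\<rho> permutes downs d I"
    and \<kappa>_rank: "\<And>c. c \<in> downs d I \<Longrightarrow> \<kappa> (rank (downs d I) c) = rank (downs d I) (\<rho> c)"
    and \<kappa>_beyond: "\<And>i. card (downs d I) \<le> i \<Longrightarrow> \<kappa> i = i"
  shows "tiling_perm d I {(c, v). (\<rho> c, v) \<in> \<tau>} = tiling_perm d I \<tau> \<circ> \<kappa>"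
proof
  fix i
  let ?D = "downs d I" and ?\<tau>' = "{(c, v). (\<rho> c, v) \<in> \<tau>}"
  have M': "down_matching d I ?\<tau>'"
    using M \<rho> by (rule down_matching_precompose)
  show "tiling_perm d I ?\<tau>' i = (tiling_perm d I \<tau> \<circ> \<kappa>) i"
  proof (cases "i < card ?D")
    case True
    then obtain c where c: "c \<in> ?D" "i = rank ?D c"
      by (rule obtain_rank_downs)
    then obtain v where "(\<rho> c, v) \<in> \<tau>"
      using M permutes_in_image[OF \<rho>] unfolding down_matching_def by blast
    then show ?thesis
      using c \<kappa>_rank tiling_perm_rank[OF M] tiling_perm_rank[OF M', of c v] by simp
  next
    case False
    then show ?thesis
      using \<kappa>_beyond tiling_perm_beyond[OF M] tiling_perm_beyond[OF M'] by simp
  qed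
qed

subsection \<open>Twisting a cycle of lozenges\<close>

lemma lozenge_cycle_downs:
  assumes M: "down_matching d I \<tau>" and C: "is_lozenge_cycle \<tau> \<sigma>"
  shows "distinct (map fst \<sigma>)" and "set (map fst \<sigma>) \<subseteq> downs d I"
proof -
  have "distinct \<sigma>" "set \<sigma> \<subseteq> \<tau>"
    using C by (auto simp: is_lozenge_cycle_def)
  then show "distinct (map fst \<sigma>)"
    using down_matching_inj_on_fst[OF M] by (simp add: distinct_map inj_on_subset)
  show "set (map fst \<sigma>) \<subseteq> downs d I"
    unfolding set_map using \<open>set \<sigma> \<subseteq> \<tau>\<close> M unfolding down_matching_def by blast
qed

lemma twist_eq_precompose:
  assumes M: "down_matching d I \<tau>" and C: "is_lozenge_cycle \<tau> \<sigma>"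
  shows "twist \<tau> \<sigma> = {(c, v). (cycle_of_list (map fst \<sigma>) c, v) \<in> \<tau>}"
proof -
  let ?n = "length \<sigma>" and ?bs = "map fst \<sigma>"
  let ?\<rho> = "cycle_of_list ?bs" and ?next = "\<lambda>i. (i + 1) mod ?n"
  have in_\<tau>: "\<sigma> ! i \<in> \<tau>" if "i < ?n" for i
    using C that by (auto simp: is_lozenge_cycle_def)
  have next_lt: "?next i < ?n" if "i < ?n" for i
    using that by (intro mod_less_divisor) linarith
  have \<rho>_step: "?\<rho> (fst (\<sigma> ! i)) = fst (\<sigma> ! ?next i)" if i: "i < ?n" for i
  proof -
    have "map ?\<rho> ?bs = rotate 1 ?bs"
      using cyclic_rotation[OF lozenge_cycle_downs(1)[OF M C], of 1] by simp
    then have "?\<rho> (?bs ! i) = rotate 1 ?bs ! i"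
      using i by (metis length_map nth_map)
    also have "\<dots> = ?bs ! ?next i"
      using i nth_rotate[of i ?bs 1] by (simp add: add.commute del: rotate1_length01)
    finally show ?thesis
      using i next_lt[OF i] by simp
  qed
  have partner: "v = snd (\<sigma> ! i)" if "(fst (\<sigma> ! i), v) \<in> \<tau>" "i < ?n" for i v
    using down_matching_unique[OF M that(1)] in_\<tau>[OF that(2)] by simp
  have not_down_of_cycle: "fst p \<notin> set ?bs" if "p \<in> \<tau>" "p \<notin> set \<sigma>" for p
  proof
    assume "fst p \<in> set ?bs"
    then obtain q where q: "q \<in> set \<sigma>" "fst q = fst p"
      by auto
    then have "q \<in> \<tau>"
      using C by (auto simp: is_lozenge_cycle_def)
    then have "snd q = snd p"
      using down_matching_unique[OF M] that(1) q(2) by (metis prod.collapse)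
    then show False
      using q that(2) by (metis prod.collapse)
  qed
  show ?thesis
  proof (intro set_eqI iffI)
    fix p assume "p \<in> twist \<tau> \<sigma>"
    then consider "p \<in> \<tau>" "p \<notin> set \<sigma>"
      | i where "i < ?n" "p = (fst (\<sigma> ! i), snd (\<sigma> ! ?next i))"
      unfolding twist_def by blast
    then show "p \<in> {(c, v). (?\<rho> c, v) \<in> \<tau>}"
    proof cases
      case 1
      then have "?\<rho> (fst p) = fst p"
        using not_down_of_cycle by (blast intro: id_outside_supp)
      then show ?thesis
        using 1 by (cases p) simp
    next
      case 2
      then show ?thesis
        using \<rho>_step in_\<tau>[OF next_lt] by simp
    qed
  next
    fix p assume "p \<in> {(c, v). (?\<rho> c, v) \<in> \<tau>}"
    then obtain c v where p: "p = (c, v)" "(?\<rho> c, v) \<in> \<tau>"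
      by blast
    show "p \<in> twist \<tau> \<sigma>"
    proof (cases "c \<in> set ?bs")
      case True
      then obtain i where i: "i < ?n" "c = fst (\<sigma> ! i)"
        by (auto simp: in_set_conv_nth)
      then have "v = snd (\<sigma> ! ?next i)"
        using p(2) \<rho>_step partner next_lt by metis
      then show ?thesis
        using p i unfolding twist_def by blast
    next
      case False
      then have "(c, v) \<in> \<tau>" "(c, v) \<notin> set \<sigma>"
        using p(2) id_outside_supp[OF False] by (auto simp: image_iff)
      then show ?thesis
        using p unfolding twist_def by blast
    qed
  qed
qed

lemma tiling_perm_twist:
  assumes M: "down_matching d I \<tau>" and C: "is_lozenge_cycle \<tau> \<sigma>"
  shows "tiling_perm d I (twist \<tau> \<sigma>) =
           tiling_perm d I \<tau> \<circ> cycle_of_list (map (rank (downs d I)) (map fst \<sigma>))"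
proof -
  let ?D = "downs d I" and ?bs = "map fst \<sigma>"
  have bs: "set ?bs \<subseteq> ?D"
    using M C by (rule lozenge_cycle_downs(2))
  have inj: "inj_on (rank ?D) ?D"
    using bij_betw_rank_downs by (rule bij_betw_imp_inj_on)
  show ?thesis
    unfolding twist_eq_precompose[OF M C]
  proof (rule tiling_perm_precompose[OF M])
    show "cycle_of_list ?bs permutes ?D"
      using cycle_permutes bs by (rule permutes_subset)
    show "cycle_of_list (map (rank ?D) ?bs) (rank ?D c) = rank ?D (cycle_of_list ?bs c)"
      if "c \<in> ?D" for c
      by (intro cycle_of_list_map_apply inj_on_subset[OF inj]) (use that bs in auto)
    show "cycle_of_list (map (rank ?D) ?bs) i = i" if i: "card ?D \<le> i" for i
    proof (rule id_outside_supp)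
      show "i \<notin> set (map (rank ?D) ?bs)"
      proof
        assume "i \<in> set (map (rank ?D) ?bs)"
        then obtain b where "b \<in> ?D" "i = rank ?D b"
          using bs by auto
        then have "i < card ?D"
          using rank_downs_less_card by blast
        with i show False
          by simp
      qed
    qed
  qed
qed

theorem lemma4p1:
  fixes d :: nat and I :: "monom set" and \<tau> :: "(monom \<times> monom) set"
    and \<sigma> :: "(monom \<times> monom) list"
  assumes "monomial_ideal I"
    and T: "is_tiling d I \<tau>"
    and C: "is_lozenge_cycle \<tau> \<sigma>"
  shows "msgn d I (twist \<tau> \<sigma>) = (-1) ^ (length \<sigma> - 1) * msgn d I \<tau>"
proof -
  let ?cs = "map (rank (downs d I)) (map fst \<sigma>)"
  have M: "down_matching d I \<tau>"
    using T by (rule tiling_down_matching)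
  have "distinct ?cs"
  proof (rule distinct_map[THEN iffD2], intro conjI)
    show "distinct (map fst \<sigma>)"
      using M C by (rule lozenge_cycle_downs(1))
    show "inj_on (rank (downs d I)) (set (map fst \<sigma>))"
      using bij_betw_imp_inj_on[OF bij_betw_rank_downs] lozenge_cycle_downs(2)[OF M C]
      by (rule inj_on_subset)
  qed
  then have "sign (cycle_of_list ?cs) = (-1) ^ (length \<sigma> - 1)"
    by (simp add: sign_cycle_of_list)
  moreover have "permutation (tiling_perm d I \<tau>)"
    using tiling_perm_permutes[OF T] permutation_permutes by blast
  ultimately show ?thesis
    unfolding msgn_def tiling_perm_twist[OF M C]
    by (simp add: sign_compose permutation_of_cycle)
qed

end
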